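(* Let $\ell\ge 1$ and $k$ be integers with $k>2\ell+2$. Let $G_k$, $r$, $s_1,s_2,t_1,t_2$ and $Z$ be as defined in the context, and let $G$ be obtained from $G_k$ by replacing each edge of $G_k$ that has at least one end in $Z$ by a path of length more than $2\ell$ (the lengths of these paths may differ; their internal vertices are new). Let $S=\{r,s_1,s_2\}$ and $T=\{r,t_1,t_2\}$. Then for every $X\subseteq V(G)$ with $|X|\le 2$, there is a path $P$ of $G$ between $S$ and $T$ such that $d(X,P)>\ell$.
   Context: For an integer $k\ge 2$, let $B$ be a uniform binary tree of depth $k$: a rooted tree with root $r$ and $2^k-1$ vertices, in which every non-leaf vertex has exactly two children (a left child and a right child), and every path from the root to a leaf has exactly $k-1$ edges. Draw $B$ in the plane in the usual way, and let $p_1,\dots,p_m$ ($m=2^{k-2}$) be the vertices at distance $k-2$ from $r$, in left-to-right order. Let $\lambda_i,\rho_i$ be the left and right children (leaves) of $p_i$. Add two new vertices $s_2,t_1$, and let $Z$ be the set of leaves of $B$ together with $s_2,t_1$. Add a path $M$ with vertex set $Z$ whose vertices in order are $$\lambda_1,\ s_2,\ \lambda_2,\ \rho_1,\ \lambda_3,\ \rho_2,\ \dots,\ \lambda_m,\ \rho_{m-1},\ t_1,\ \rho_m .$$ The resulting graph $B\cup M$ is $G_k$. Set $s_1=\lambda_1$ and $t_2=\rho_m$ (the ends of $M$), so $s_2,t_1$ are the neighbours in $M$ of $s_1,t_2$ respectively. A path between $S$ and $T$ is a path with one end in $S$ and the other in $T$ (a one-vertex path on a vertex of $S\cap T$ counts).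 For sets of vertices or subgraphs $X,Y$, $d(X,Y)$ is the number of edges of a shortest path with one end in $X$ and the other in $Y$ (infinite if there is none). *)

theory Defs
  imports Main
begin

(* Vertices: tree vertices in heap numbering (root 1, children of i are 2i, 2i+1,
   vertices 1..2^k-1), the two new vertices s_2, t_1, and subdivision vertices
   Sub e j = j-th internal vertex of the subdivided base edge e. *)
datatype vtx = Tr nat | S2 | T1 | Sub "vtx \<times> vtx" nat

definition m_of :: "nat \<Rightarrow> nat" where "m_of k = 2 ^ (k - 2)"

(* p_i = Tr (2^(k-2) + i - 1), i = 1..m; lambda_i, rho_i its left / right child *)
definition lam :: "nat \<Rightarrow> nat \<Rightarrow> vtx" where "lam k i = Tr (2 * (2 ^ (k - 2) + i - 1))"
definition rho :: "nat \<Rightarrow> nat \<Rightarrow> vtx" where "rho k i = Tr (2 * (2 ^ (k - 2) + i - 1) + 1)"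

definition root :: vtx where "root = Tr 1"

definition tree_vertices :: "nat \<Rightarrow> vtx set" where
  "tree_vertices k = Tr ` {1..<2 ^ k}"

definition leaves :: "nat \<Rightarrow> vtx set" where
  "leaves k = Tr ` {2 ^ (k - 1)..<2 ^ k}"

definition Zset :: "nat \<Rightarrow> vtx set" where
  "Zset k = leaves k \<union> {S2, T1}"

(* the path M: lambda_1, s_2, lambda_2, rho_1, ..., lambda_m, rho_{m-1}, t_1, rho_m *)
definition Mlist :: "nat \<Rightarrow> vtx list" where
  "Mlist k = [lam k 1, S2] @ concat (map (\<lambda>i. [lam k i, rho k (i - 1)]) [2..<m_of k + 1])
             @ [T1, rho k (m_of k)]"

definition tree_edges :: "nat \<Rightarrow> (vtx \<times> vtx) set" where
  "tree_edges k = {(Tr i, Tr j) | i j. 1 \<le> i \<and> j < 2 ^ k \<and> (j = 2 * i \<or> j = 2 * i + 1)}"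

definition M_edges :: "nat \<Rightarrow> (vtx \<times> vtx) set" where
  "M_edges k = {(Mlist k ! i, Mlist k ! (i + 1)) | i. i + 1 < length (Mlist k)}"

(* edges of G_k = B \<union> M (as oriented pairs; the graph is undirected) *)
definition base_edges :: "nat \<Rightarrow> (vtx \<times> vtx) set" where
  "base_edges k = tree_edges k \<union> M_edges k"

definition sub_edges :: "nat \<Rightarrow> (vtx \<times> vtx) set" where
  "sub_edges k = {(u, v) \<in> base_edges k. u \<in> Zset k \<or> v \<in> Zset k}"

(* G: edge e \<in> sub_edges k is replaced by a path of length L e *)
definition subv :: "((vtx \<times> vtx) \<Rightarrow> nat) \<Rightarrow> (vtx \<times> vtx) \<Rightarrow> nat \<Rightarrow> vtx" where
  "subv L e j = (if j = 0 then fst e else if j = L e then snd e else Sub e j)"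

definition GV :: "nat \<Rightarrow> ((vtx \<times> vtx) \<Rightarrow> nat) \<Rightarrow> vtx set" where
  "GV k L = tree_vertices k \<union> {S2, T1} \<union> {Sub e j | e j. e \<in> sub_edges k \<and> 1 \<le> j \<and> j < L e}"

definition GE :: "nat \<Rightarrow> ((vtx \<times> vtx) \<Rightarrow> nat) \<Rightarrow> (vtx \<times> vtx) set" where
  "GE k L = (base_edges k - sub_edges k)
            \<union> {(subv L e j, subv L e (j + 1)) | e j. e \<in> sub_edges k \<and> j < L e}"

definition adj :: "nat \<Rightarrow> ((vtx \<times> vtx) \<Rightarrow> nat) \<Rightarrow> vtx \<Rightarrow> vtx \<Rightarrow> bool" where
  "adj k L x y \<longleftrightarrow> (x, y) \<in> GE k L \<or> (y, x) \<in> GE k L"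

definition is_path :: "nat \<Rightarrow> ((vtx \<times> vtx) \<Rightarrow> nat) \<Rightarrow> vtx list \<Rightarrow> bool" where
  "is_path k L p \<longleftrightarrow> p \<noteq> [] \<and> distinct p \<and> set p \<subseteq> GV k L \<and>
     (\<forall>i. i + 1 < length p \<longrightarrow> adj k L (p ! i) (p ! (i + 1)))"

(* d(x,v) \<le> l in G: some path from x to v with at most l edges *)
definition dist_le :: "nat \<Rightarrow> ((vtx \<times> vtx) \<Rightarrow> nat) \<Rightarrow> vtx \<Rightarrow> vtx \<Rightarrow> nat \<Rightarrow> bool" where
  "dist_le k L x v l \<longleftrightarrow> (\<exists>q. is_path k L q \<and> hd q = x \<and> last q = v \<and> length q \<le> l + 1)"

end

theory Submission
  imports Defs
begin

(* All lower bounds on distances come from integer functions on V(G) that change by at most 1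
   along every edge: such an f gives d(x, v) >= |f x - f v|.

   If no vertex of X is within distance l of r, the one-vertex path r works. Otherwise such a
   vertex x1 has depth at most l in B (depth is 1-Lipschitz when the vertices of Z and the
   subdivision vertices get the leaf depth k - 1), while every path used below stays at depth
   at least k - 2 > 2l; so only the second vertex x2 of X matters. The candidate paths are the
   subdivided M from lambda_1 to rho_m, its two shortenings starting at s_2 or ending at t_1,
   and, for each i, the path along M to lambda_i, up to p_i, down to rho_i and along M to rho_m.
   Because every edge at Z has length more than 2l, the vertex x2 is farther than l from M, or
   within distance l of a single vertex z of Z, or in the middle of one subdivided edge of M;
   one candidate avoids z together with all subdivided edges at z, and a truncated distance
   (to M, to z, or to x2 inside its edge) certifies that it is far from x2. *)

lemma concat_map_pair_upt:
  "concat (map (\<lambda>i. [f i, g i]) [a..<a+n]) =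
   map (\<lambda>t. if even t then f (a + t div 2) else g (a + t div 2)) [0..<2*n]"
proof (induction n)
  case (Suc n)
  have "[0..<2 * Suc n] = [0..<2*n] @ [2*n, 2*n+1]" by simp
  then show ?case using Suc by simp
qed simp

lemma successively_upt:
  "(\<And>j. a \<le> j \<Longrightarrow> Suc j < b \<Longrightarrow> P j (Suc j)) \<Longrightarrow> successively P [a..<b]"
  unfolding successively_conv_nth by (auto simp: nth_upt add.commute)

lemma successively_append_join:
  "successively P (xs @ [y]) \<Longrightarrow> successively P (y # ys) \<Longrightarrow> successively P (xs @ y # ys)"
  by (cases "xs = []") (auto simp: successively_append_iff)

lemma lipschitz_walk_bound:
  fixes f :: "'a \<Rightarrow> int"
  assumes "\<And>a b. R a b \<Longrightarrow> \<bar>f a - f b\<bar> \<le> 1" and "successively R q" and "q \<noteq> []"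
  shows "\<bar>f (hd q) - f (last q)\<bar> \<le> int (length q) - 1"
  using assms(2,3)
proof (induction q rule: induct_list012)
  case (3 x y xs)
  have "\<bar>f x - f y\<bar> \<le> 1" using 3(3) assms(1) by simp
  moreover have "\<bar>f y - f (last (y # xs))\<bar> \<le> int (length (y # xs)) - 1"
    using 3 by simp
  ultimately show ?case by simp
qed simp_all

fun heap_depth :: "nat \<Rightarrow> nat" where
  "heap_depth n = (if n < 2 then 0 else Suc (heap_depth (n div 2)))"
declare heap_depth.simps[simp del]

lemma heap_depth_rec: "n \<ge> 2 \<Longrightarrow> heap_depth n = Suc (heap_depth (n div 2))"
  by (simp add: heap_depth.simps)

lemma heap_depth_one [simp]: "heap_depth (Suc 0) = 0"
  by (simp add: heap_depth.simps)

lemma heap_depth_eqI: "2^d \<le> n \<Longrightarrow> n < 2 * 2^d \<Longrightarrow> heap_depth n = d"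
proof (induction d arbitrary: n)
  case 0 then show ?case by (simp add: heap_depth.simps)
next
  case (Suc d)
  have "heap_depth (n div 2) = d" using Suc by (intro Suc.IH) auto
  moreover have "n \<ge> 2" using Suc.prems(1) le_trans[of 2 "2 * 2 ^ d" n] by simp
  ultimately show ?case by (simp add: heap_depth_rec)
qed

lemma card_le_2_obtain:
  assumes "finite X" "card X \<le> 2" "x \<in> X"
  obtains y where "y \<in> X" "X \<subseteq> {x, y}"
proof (cases "X - {x} = {}")
  case True
  then show ?thesis using that assms(3) by blast
next
  case False
  then obtain y where y: "y \<in> X - {x}" by blast
  have "card (X - {x}) \<le> Suc 0" using assms by (simp add: card_Diff_singleton)
  then have "X - {x} \<subseteq> {y}" using card_le_Suc0_iff_eq[of "X - {x}"] assms(1) y by blast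
  then show ?thesis using that y by blast
qed

locale subdivided_Gk =
  fixes l k :: nat and L :: "(vtx \<times> vtx) \<Rightarrow> nat"
  assumes l_pos: "l \<ge> 1" and k_gt: "k > 2 * l + 2"
    and L_gt: "\<forall>e \<in> sub_edges k. L e > 2 * l"
begin

abbreviation "m \<equiv> m_of k"

lemma k_ge_5: "k \<ge> 5"
  using l_pos k_gt by linarith

lemma two_pow_k: "2^k = 4*m" and two_pow_k_minus_1: "2^(k - Suc 0) = 2*m" and m_ge_8: "m \<ge> 8"
proof -
  have k: "k = (k - 2) + 2" using k_ge_5 by simp
  show "2^k = 4*m" "2^(k - Suc 0) = 2*m" by (subst k, simp add: m_of_def)+
  have "2^3 \<le> (2::nat)^(k-2)" using k_ge_5 by (intro power_increasing) auto
  then show "m \<ge> 8" by (simp add: m_of_def)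
qed

lemma lam_Tr: "i \<ge> 1 \<Longrightarrow> lam k i = Tr (2*m + 2*i - 2)"
  and rho_Tr: "i \<ge> 1 \<Longrightarrow> rho k i = Tr (2*m + 2*i - 1)"
  by (auto simp: lam_def rho_def m_of_def)

lemma lam_not_Sub [simp]: "lam k i \<noteq> Sub e j"
  by (simp add: lam_def)

lemma Zset_conv: "Zset k = Tr ` {2*m..<4*m} \<union> {S2, T1}"
  by (simp add: Zset_def leaves_def two_pow_k two_pow_k_minus_1)

lemma Tr_in_Zset_iff: "Tr c \<in> Zset k \<longleftrightarrow> 2*m \<le> c \<and> c < 4*m"
  by (auto simp: Zset_conv)

lemma Sub_notin_Zset: "Sub e j \<notin> Zset k"
  by (auto simp: Zset_conv)

lemma tree_vertices_conv: "tree_vertices k = Tr ` {1..<4*m}"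
  by (simp add: tree_vertices_def two_pow_k)

subsection \<open>The path M\<close>

text \<open>In heap numbering M visits the leaf \<open>Tr (2*m + t)\<close> at an even position \<open>t\<close> and
  \<open>Tr (2*m + t - 2)\<close> at an odd one, except for \<open>s\<^sub>2\<close> at position 1 and \<open>t\<^sub>1\<close> at \<open>2*m\<close>.\<close>
definition M_vertex :: "nat \<Rightarrow> vtx" where
  "M_vertex t = (if t = 1 then S2 else if t = 2*m then T1 else Tr (2*m + (if even t then t else t - 2)))"

definition M_edge :: "nat \<Rightarrow> vtx \<times> vtx" where
  "M_edge t = (M_vertex t, M_vertex (Suc t))"

lemma M_vertex_special [simp]:
  "M_vertex 0 = lam k 1" "M_vertex (Suc 0) = S2" "M_vertex (2*m) = T1" "M_vertex (Suc (2*m)) = rho k m"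
  using m_ge_8 by (auto simp: M_vertex_def lam_Tr rho_Tr)

lemma lam_eq_M_vertex: "1 \<le> i \<Longrightarrow> i \<le> m \<Longrightarrow> lam k i = M_vertex (2*i - 2)"
  and rho_eq_M_vertex: "1 \<le> i \<Longrightarrow> i \<le> m \<Longrightarrow> rho k i = M_vertex (2*i + 1)"
  by (auto simp: M_vertex_def lam_Tr rho_Tr) presburger+

lemma M_vertex_eq_iff: "s \<le> 2*m+1 \<Longrightarrow> t \<le> 2*m+1 \<Longrightarrow> M_vertex s = M_vertex t \<longleftrightarrow> s = t"
  using m_ge_8 by (auto simp: M_vertex_def split: if_splits) presburger+

lemma Zset_eq_M_vertices: "Zset k = M_vertex ` {..2*m+1}"
proof
  have "S2 \<in> Zset k" "T1 \<in> Zset k" by (simp_all add: Zset_def)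
  then show "M_vertex ` {..2*m+1} \<subseteq> Zset k"
    using m_ge_8 by (auto simp: M_vertex_def Tr_in_Zset_iff; presburger)
next
  have "Tr c \<in> M_vertex ` {..2*m+1}" if "2*m \<le> c" "c < 4*m" for c
  proof (cases "even c")
    case True
    then have "M_vertex (c - 2*m) = Tr c" using that by (auto simp: M_vertex_def) presburger
    moreover have "c - 2*m \<le> 2*m+1" using that by linarith
    ultimately show ?thesis by (metis atMost_iff image_eqI)
  next
    case False
    then have "M_vertex (c - 2*m + 2) = Tr c" using that by (auto simp: M_vertex_def) presburger+
    moreover have "c - 2*m + 2 \<le> 2*m+1" using that False by presburger
    ultimately show ?thesis by (metis atMost_iff image_eqI)
  qed
  moreover have "S2 = M_vertex 1" "T1 = M_vertex (2*m)" by simp_all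
  ultimately show "Zset k \<subseteq> M_vertex ` {..2*m+1}" unfolding Zset_conv by fastforce
qed

lemma M_vertex_in_Zset: "t \<le> 2*m+1 \<Longrightarrow> M_vertex t \<in> Zset k"
  by (simp add: Zset_eq_M_vertices)

lemma M_vertex_not_Sub: "t \<le> 2*m+1 \<Longrightarrow> M_vertex t \<noteq> Sub e j"
  using M_vertex_in_Zset Sub_notin_Zset by metis

lemma Mlist_eq: "Mlist k = map M_vertex [0..<2*m+2]"
proof -
  have c: "concat (map (\<lambda>i. [lam k i, rho k (i - 1)]) [2..<m + 1]) =
     map (\<lambda>t. if even t then lam k (2 + t div 2) else rho k (2 + t div 2 - 1)) [0..<2*(m-1)]"
    using concat_map_pair_upt[of "lam k" "\<lambda>i. rho k (i - 1)" 2 "m - 1"] m_ge_8 by simp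
  show ?thesis
  proof (rule nth_equalityI)
    show "length (Mlist k) = length (map M_vertex [0..<2 * m + 2])"
      using m_ge_8 unfolding Mlist_def c by simp
  next
    fix t assume "t < length (Mlist k)"
    then have t: "t < 2*m+2" using m_ge_8 unfolding Mlist_def c by simp
    consider "t = 0" | "t = 1" | "2 \<le> t \<and> t < 2*m" | "t = 2*m" | "t = 2*m+1" using t by linarith
    then show "Mlist k ! t = map M_vertex [0..<2 * m + 2] ! t"
    proof cases
      case 3
      obtain s where s: "t = s + 2" using 3 by (metis le_add_diff_inverse2)
      have "s < 2*(m-1)" using 3 s by linarith
      then have "Mlist k ! t = (if even s then lam k (2 + s div 2) else rho k (2 + s div 2 - 1))"
        unfolding Mlist_def c s by (simp add: nth_append)
      also have "\<dots> = M_vertex t" using 3 unfolding s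
        by (auto simp: M_vertex_def lam_Tr rho_Tr elim!: evenE oddE)
      finally show ?thesis using t by (simp del: upt_Suc)
    qed (use m_ge_8 t in \<open>unfold Mlist_def c, auto simp: nth_append simp del: upt_Suc\<close>)
  qed
qed

lemma M_edges_eq: "M_edges k = M_edge ` {..<2*m+1}"
proof -
  have nth: "Mlist k ! i = M_vertex i" if "i < 2*m+2" for i
    using that by (simp add: Mlist_eq del: upt_Suc)
  have "length (Mlist k) = 2*m+2" by (simp add: Mlist_eq del: upt_Suc)
  then have "M_edges k = (\<lambda>i. (Mlist k ! i, Mlist k ! (i + 1))) ` {..<2*m+1}"
    unfolding M_edges_def by auto
  also have "\<dots> = M_edge ` {..<2*m+1}"
    by (rule image_cong) (simp_all add: nth M_edge_def)
  finally show ?thesis .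
qed

subsection \<open>The subdivided edges\<close>

definition parent_vtx :: "nat \<Rightarrow> vtx" where
  "parent_vtx i = Tr (m + i - 1)"

definition left_leaf_edge :: "nat \<Rightarrow> vtx \<times> vtx" where
  "left_leaf_edge i = (parent_vtx i, lam k i)"

definition right_leaf_edge :: "nat \<Rightarrow> vtx \<times> vtx" where
  "right_leaf_edge i = (parent_vtx i, rho k i)"

lemma parent_vtx_not_Sub [simp]: "parent_vtx i \<noteq> Sub e j"
  by (simp add: parent_vtx_def)

lemma parent_vtx_notin_Zset: "1 \<le> i \<Longrightarrow> i \<le> m \<Longrightarrow> parent_vtx i \<notin> Zset k"
  by (auto simp: parent_vtx_def Tr_in_Zset_iff)

lemma M_vertex_ne_parent_vtx: "t \<le> 2*m+1 \<Longrightarrow> 1 \<le> i \<Longrightarrow> i \<le> m \<Longrightarrow> M_vertex t \<noteq> parent_vtx i"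
  using parent_vtx_notin_Zset M_vertex_in_Zset by metis

lemma M_edge_eq_iff: "s \<le> 2*m \<Longrightarrow> t \<le> 2*m \<Longrightarrow> M_edge s = M_edge t \<longleftrightarrow> s = t"
  by (auto simp: M_edge_def M_vertex_eq_iff)

lemma M_edge_ne_leaf_edge:
  "t \<le> 2*m \<Longrightarrow> 1 \<le> i \<Longrightarrow> i \<le> m \<Longrightarrow> M_edge t \<noteq> left_leaf_edge i \<and> M_edge t \<noteq> right_leaf_edge i"
  using M_vertex_ne_parent_vtx[of t i] by (auto simp: M_edge_def left_leaf_edge_def right_leaf_edge_def)

lemma left_ne_right_leaf_edge: "left_leaf_edge i \<noteq> right_leaf_edge j"
  by (simp add: left_leaf_edge_def right_leaf_edge_def lam_def rho_def) presburger

lemma M_edge_in_sub_edges: "t < 2*m+1 \<Longrightarrow> M_edge t \<in> sub_edges k"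
  using M_vertex_in_Zset[of t] by (auto simp: sub_edges_def base_edges_def M_edges_eq M_edge_def)

lemma leaf_edge_in_sub_edges: "2*m \<le> c \<Longrightarrow> c < 4*m \<Longrightarrow> (Tr (c div 2), Tr c) \<in> sub_edges k"
proof -
  assume c: "2*m \<le> c" "c < 4*m"
  then have "(Tr (c div 2), Tr c) \<in> tree_edges k"
    unfolding tree_edges_def two_pow_k using m_ge_8 by auto
  then show ?thesis using c by (auto simp: sub_edges_def base_edges_def Tr_in_Zset_iff)
qed

lemma left_leaf_edge_in_sub_edges: "1 \<le> i \<Longrightarrow> i \<le> m \<Longrightarrow> left_leaf_edge i \<in> sub_edges k"
  and right_leaf_edge_in_sub_edges: "1 \<le> i \<Longrightarrow> i \<le> m \<Longrightarrow> right_leaf_edge i \<in> sub_edges k"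
proof -
  assume i: "1 \<le> i" "i \<le> m"
  have "(2*m+2*i-2) div 2 = m + i - 1" "(2*m+2*i-1) div 2 = m + i - 1" using i by presburger+
  then show "left_leaf_edge i \<in> sub_edges k" "right_leaf_edge i \<in> sub_edges k"
    using i leaf_edge_in_sub_edges[of "2*m+2*i-2"] leaf_edge_in_sub_edges[of "2*m+2*i-1"]
    by (simp_all add: left_leaf_edge_def right_leaf_edge_def parent_vtx_def lam_Tr rho_Tr)
qed

lemma sub_edge_cases:
  assumes "e \<in> sub_edges k"
  obtains (M) t where "t < 2*m+1" "e = M_edge t"
    | (leaf) c where "2*m \<le> c" "c < 4*m" "e = (Tr (c div 2), Tr c)"
proof (cases "e \<in> M_edges k")
  case True
  then show ?thesis using that(1) unfolding M_edges_eq by auto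
next
  case False
  then have "e \<in> tree_edges k" "fst e \<in> Zset k \<or> snd e \<in> Zset k"
    using assms by (auto simp: sub_edges_def base_edges_def)
  then obtain i j where "e = (Tr i, Tr j)" "1 \<le> i" "j < 4*m" "j = 2*i \<or> j = 2*i+1"
      "2*m \<le> j"
    unfolding tree_edges_def two_pow_k by (auto simp: Tr_in_Zset_iff)
  then show ?thesis using that(2) by auto
qed

lemma unsubdivided_edge:
  assumes "(a, b) \<in> base_edges k - sub_edges k"
  obtains i j where "a = Tr i" "b = Tr j" "1 \<le> i" "j = 2*i \<or> j = 2*i+1" "j < 2*m"
proof -
  have "(a, b) \<notin> M_edges k" using assms M_edge_in_sub_edges unfolding M_edges_eq by auto
  then have "(a, b) \<in> tree_edges k" "b \<notin> Zset k"
    using assms by (auto simp: sub_edges_def base_edges_def)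
  then show ?thesis
    using that unfolding tree_edges_def two_pow_k by (auto simp: Tr_in_Zset_iff)
qed

lemma sub_edge_ends_not_Sub: "e \<in> sub_edges k \<Longrightarrow> fst e \<noteq> Sub e' j \<and> snd e \<noteq> Sub e' j"
  by (erule sub_edge_cases) (auto simp: M_edge_def M_vertex_not_Sub)

lemma L_sub_edge: "e \<in> sub_edges k \<Longrightarrow> 2*l+1 \<le> L e"
  using L_gt by auto

lemma subv_0 [simp]: "subv L e 0 = fst e"
  by (simp add: subv_def)

lemma subv_L: "e \<in> sub_edges k \<Longrightarrow> subv L e (L e) = snd e"
  using L_sub_edge[of e] by (simp add: subv_def)

lemma subv_inner: "0 < j \<Longrightarrow> j < L e \<Longrightarrow> subv L e j = Sub e j"
  by (simp add: subv_def)

lemma Zset_subset_GV: "Zset k \<subseteq> GV k L"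
  by (auto simp: GV_def Zset_conv tree_vertices_conv)

lemma Sub_in_GV: "e \<in> sub_edges k \<Longrightarrow> 0 < j \<Longrightarrow> j < L e \<Longrightarrow> Sub e j \<in> GV k L"
  unfolding GV_def by force

lemma parent_vtx_in_GV: "1 \<le> i \<Longrightarrow> i \<le> m \<Longrightarrow> parent_vtx i \<in> GV k L"
proof -
  assume "1 \<le> i" "i \<le> m"
  then have "Tr (m + i - 1) \<in> tree_vertices k" unfolding tree_vertices_conv by (intro imageI) auto
  then show ?thesis by (simp add: GV_def parent_vtx_def)
qed

lemma root_in_GV: "root \<in> GV k L"
proof -
  have "Tr 1 \<in> tree_vertices k" unfolding tree_vertices_conv using m_ge_8 by (intro imageI) auto
  then show ?thesis by (simp add: GV_def root_def)
qed

subsection \<open>Lipschitz certificates for distances\<close>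

definition graph_lipschitz :: "(vtx \<Rightarrow> int) \<Rightarrow> bool" where
  "graph_lipschitz f \<longleftrightarrow> (\<forall>a b. adj k L a b \<longrightarrow> \<bar>f a - f b\<bar> \<le> 1)"

definition far_from :: "vtx \<Rightarrow> vtx list \<Rightarrow> bool" where
  "far_from x P \<longleftrightarrow> (\<forall>v \<in> set P. \<not> dist_le k L x v l)"

lemma not_dist_le_if_lipschitz:
  assumes "graph_lipschitz f" and "\<bar>f x - f v\<bar> > int l"
  shows "\<not> dist_le k L x v l"
proof
  assume "dist_le k L x v l"
  then obtain q where q: "is_path k L q" "hd q = x" "last q = v" "length q \<le> l + 1"
    unfolding dist_le_def by blast
  have "successively (adj k L) q" "q \<noteq> []"
    using q(1) unfolding is_path_def successively_conv_nth by auto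
  then have "\<bar>f x - f v\<bar> \<le> int (length q) - 1"
    using lipschitz_walk_bound[of "adj k L" f q] assms(1) q(2,3) unfolding graph_lipschitz_def by blast
  then show False using q(4) assms(2) by linarith
qed

lemma far_from_if_lipschitz:
  "graph_lipschitz f \<Longrightarrow> (\<And>v. v \<in> set P \<Longrightarrow> \<bar>f x - f v\<bar> > int l) \<Longrightarrow> far_from x P"
  unfolding far_from_def using not_dist_le_if_lipschitz by blast

definition extend_sub :: "(vtx \<Rightarrow> int) \<Rightarrow> ((vtx \<times> vtx) \<Rightarrow> nat \<Rightarrow> int) \<Rightarrow> vtx \<Rightarrow> int" where
  "extend_sub G F v = (case v of Sub e j \<Rightarrow> F e j | _ \<Rightarrow> G v)"

lemma extend_sub_Sub [simp]: "extend_sub G F (Sub e j) = F e j"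
  by (simp add: extend_sub_def)

lemma extend_sub_not_Sub: "(\<And>e j. v \<noteq> Sub e j) \<Longrightarrow> extend_sub G F v = G v"
  by (cases v) (auto simp: extend_sub_def)

lemma extend_sub_M_vertex [simp]: "t \<le> 2*m+1 \<Longrightarrow> extend_sub G F (M_vertex t) = G (M_vertex t)"
  using M_vertex_not_Sub by (intro extend_sub_not_Sub) blast

text \<open>Along a subdivided edge \<open>e\<close> the values of the extension, read from \<open>fst e\<close> to \<open>snd e\<close>,
  are \<open>H 0, \<dots>, H (L e)\<close>.\<close>
lemma graph_lipschitz_extend_sub:
  assumes tree: "\<And>i j. 1 \<le> i \<Longrightarrow> j = 2*i \<or> j = 2*i+1 \<Longrightarrow> j < 2*m \<Longrightarrow> \<bar>G (Tr i) - G (Tr j)\<bar> \<le> 1"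
    and sub: "\<And>e. e \<in> sub_edges k \<Longrightarrow> \<exists>H. (\<forall>j. \<bar>H j - H (Suc j)\<bar> \<le> 1) \<and> G (fst e) = H 0
       \<and> G (snd e) = H (L e) \<and> (\<forall>j. 0 < j \<longrightarrow> j < L e \<longrightarrow> F e j = H j)"
  shows "graph_lipschitz (extend_sub G F)"
proof -
  have "\<bar>extend_sub G F a - extend_sub G F b\<bar> \<le> 1" if ab: "(a, b) \<in> GE k L" for a b
  proof (cases "(a, b) \<in> base_edges k - sub_edges k")
    case True
    then show ?thesis using tree by (elim unsubdivided_edge) (simp add: extend_sub_def)
  next
    case False
    then obtain e j where e: "e \<in> sub_edges k" "j < L e" "a = subv L e j" "b = subv L e (j+1)"
      using ab unfolding GE_def by blast
    obtain H where H: "\<forall>j. \<bar>H j - H (Suc j)\<bar> \<le> 1" "G (fst e) = H 0"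
       "G (snd e) = H (L e)" "\<forall>j. 0 < j \<longrightarrow> j < L e \<longrightarrow> F e j = H j"
      using sub[OF e(1)] by blast
    have on_edge: "extend_sub G F (subv L e i) = H i" if i: "i \<le> L e" for i
    proof -
      consider "i = 0" | "i = L e" | "0 < i \<and> i < L e" using i by linarith
      then show ?thesis
        by cases (use H sub_edge_ends_not_Sub[OF e(1)] in
            \<open>auto simp: subv_L[OF e(1)] subv_inner extend_sub_not_Sub\<close>)
    qed
    show ?thesis using H(1) e by (simp add: on_edge)
  qed
  then show ?thesis unfolding graph_lipschitz_def adj_def by (metis abs_minus_commute)
qed

lemma heap_depth_leaf: "2*m \<le> c \<Longrightarrow> c < 4*m \<Longrightarrow> heap_depth c = k - 1"
  by (rule heap_depth_eqI) (use two_pow_k two_pow_k_minus_1 m_ge_8 in \<open>auto simp: numeral_eq_Suc\<close>)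

lemma heap_depth_parent_vtx: "m \<le> c \<Longrightarrow> c < 2*m \<Longrightarrow> heap_depth c = k - 2"
  by (rule heap_depth_eqI) (use k_ge_5 in \<open>auto simp: m_of_def power_Suc[symmetric] Suc_diff_Suc numeral_eq_Suc\<close>)

definition depth :: "vtx \<Rightarrow> int" where
  "depth = extend_sub (\<lambda>v. case v of Tr i \<Rightarrow> int (heap_depth i) | _ \<Rightarrow> int k - 1) (\<lambda>_ _. int k - 1)"

lemma depth_Zset: "z \<in> Zset k \<Longrightarrow> depth z = int k - 1"
  using k_ge_5 by (auto simp: Zset_conv depth_def extend_sub_def heap_depth_leaf)

lemma depth_Sub: "depth (Sub e j) = int k - 1"
  by (simp add: depth_def)

lemma depth_root: "depth root = 0"
  by (simp add: depth_def root_def extend_sub_def)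

lemma depth_parent_vtx: "1 \<le> i \<Longrightarrow> i \<le> m \<Longrightarrow> depth (parent_vtx i) = int k - 2"
  using k_ge_5 heap_depth_parent_vtx[of "m + i - 1"] by (simp add: depth_def parent_vtx_def extend_sub_def)

lemma graph_lipschitz_depth: "graph_lipschitz depth"
  unfolding depth_def
proof (rule graph_lipschitz_extend_sub)
  fix i j :: nat assume "1 \<le> i" "j = 2*i \<or> j = 2*i+1" "j < 2*m"
  then show "\<bar>(case Tr i of Tr i \<Rightarrow> int (heap_depth i) | _ \<Rightarrow> int k - 1) -
              (case Tr j of Tr i \<Rightarrow> int (heap_depth i) | _ \<Rightarrow> int k - 1)\<bar> \<le> 1"
    using heap_depth_rec[of j] by auto
next
  fix e assume e: "e \<in> sub_edges k"
  let ?G = "\<lambda>v. case v of Tr i \<Rightarrow> int (heap_depth i) | _ \<Rightarrow> int k - 1"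
  have GZ: "?G z = int k - 1" if "z \<in> Zset k" for z
    using depth_Zset[OF that] M_vertex_not_Sub that Sub_notin_Zset
    by (metis depth_def extend_sub_not_Sub)
  show "\<exists>H. (\<forall>j. \<bar>H j - H (Suc j)\<bar> \<le> 1) \<and> ?G (fst e) = H 0 \<and> ?G (snd e) = H (L e) \<and>
            (\<forall>j. 0 < j \<longrightarrow> j < L e \<longrightarrow> int k - 1 = H j)"
    using e
  proof (cases rule: sub_edge_cases)
    case (M t)
    then show ?thesis using GZ M_vertex_in_Zset[of t] M_vertex_in_Zset[of "Suc t"]
      by (intro exI[of _ "\<lambda>j. int k - 1"]) (auto simp: M_edge_def)
  next
    case (leaf c)
    have "heap_depth (c div 2) = k - 2" using leaf by (intro heap_depth_parent_vtx) auto
    then show ?thesis using leaf k_ge_5 heap_depth_leaf[of c] L_sub_edge[OF e]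
      by (intro exI[of _ "\<lambda>j. if j = 0 then int k - 2 else int k - 1"]) auto
  qed
qed

text \<open>Distances truncated at \<open>l + 1\<close> or \<open>2 * l + 1\<close>. Since every edge at Z is longer than
  \<open>2 * l\<close>, they only need to be spelled out on the subdivided edges next to the target.\<close>
definition dist_to_M :: "vtx \<Rightarrow> int" where
  "dist_to_M = extend_sub (\<lambda>v. if v \<in> Zset k then 0 else int l + 1)
     (\<lambda>e j. if fst e \<in> Zset k then 0 else min (int l + 1) (int (L e) - int j))"

lemma graph_lipschitz_dist_to_M: "graph_lipschitz dist_to_M"
  unfolding dist_to_M_def
proof (rule graph_lipschitz_extend_sub)
  fix i j :: nat assume "1 \<le> i" "j = 2*i \<or> j = 2*i+1" "j < 2*m"
  then show "\<bar>(if Tr i \<in> Zset k then 0 else int l + 1) - (if Tr j \<in> Zset k then 0 else int l + 1)\<bar> \<le> 1"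
    by (auto simp: Tr_in_Zset_iff)
next
  fix e assume e: "e \<in> sub_edges k"
  then show "\<exists>H. (\<forall>j. \<bar>H j - H (Suc j)\<bar> \<le> 1)
      \<and> (if fst e \<in> Zset k then 0 else int l + 1) = H 0 \<and> (if snd e \<in> Zset k then 0 else int l + 1) = H (L e)
      \<and> (\<forall>j. 0 < j \<longrightarrow> j < L e \<longrightarrow>
            (if fst e \<in> Zset k then 0 else min (int l + 1) (int (L e) - int j)) = H j)"
  proof (cases rule: sub_edge_cases)
    case (M t)
    then show ?thesis using M_vertex_in_Zset[of t] M_vertex_in_Zset[of "Suc t"]
      by (intro exI[of _ "\<lambda>j. 0"]) (auto simp: M_edge_def)
  next
    case (leaf c)
    then show ?thesis using L_sub_edge[OF e]
      by (intro exI[of _ "\<lambda>j. min (int l + 1) (int (L e) - int j)"]) (auto simp: Tr_in_Zset_iff)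
  qed
qed

definition dist_to_vertex :: "vtx \<Rightarrow> vtx \<Rightarrow> int" where
  "dist_to_vertex z = extend_sub (\<lambda>v. if v = z then 0 else 2 * int l + 1)
     (\<lambda>e j. min (2 * int l + 1) (min (if fst e = z then int j else 2 * int l + 1)
                                   (if snd e = z then int (L e) - int j else 2 * int l + 1)))"

lemma graph_lipschitz_dist_to_vertex: "z \<in> Zset k \<Longrightarrow> graph_lipschitz (dist_to_vertex z)"
  unfolding dist_to_vertex_def
proof (rule graph_lipschitz_extend_sub)
  fix i j :: nat assume "1 \<le> i" "j = 2*i \<or> j = 2*i+1" "j < 2*m" and z: "z \<in> Zset k"
  then have "Tr i \<noteq> z" "Tr j \<noteq> z" by (auto simp: Zset_conv)
  then show "\<bar>(if Tr i = z then 0 else 2 * int l + 1) - (if Tr j = z then 0 else 2 * int l + 1)\<bar> \<le> 1"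
    by simp
next
  fix e assume e: "e \<in> sub_edges k"
  let ?H = "\<lambda>j. min (2 * int l + 1) (min (if fst e = z then int j else 2 * int l + 1)
                                   (if snd e = z then int (L e) - int j else 2 * int l + 1))"
  show "\<exists>H. (\<forall>j. \<bar>H j - H (Suc j)\<bar> \<le> 1) \<and> (if fst e = z then 0 else 2 * int l + 1) = H 0
      \<and> (if snd e = z then 0 else 2 * int l + 1) = H (L e) \<and> (\<forall>j. 0 < j \<longrightarrow> j < L e \<longrightarrow> ?H j = H j)"
    by (rule exI[of _ ?H]) (use L_sub_edge[OF e] in \<open>auto simp: min_def abs_if\<close>)
qed

lemma dist_to_vertex_self: "z \<in> Zset k \<Longrightarrow> dist_to_vertex z z = 0"
  by (cases z) (simp_all add: dist_to_vertex_def extend_sub_def Sub_notin_Zset)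

lemma dist_to_vertex_fst_le: "dist_to_vertex (fst e) (Sub e j) \<le> int j"
  and dist_to_vertex_snd_le: "dist_to_vertex (snd e) (Sub e j) \<le> int (L e) - int j"
  by (simp_all add: dist_to_vertex_def)

definition dist_to_inner :: "vtx \<times> vtx \<Rightarrow> nat \<Rightarrow> vtx \<Rightarrow> int" where
  "dist_to_inner e0 j0 = extend_sub (\<lambda>v. int l + 1)
     (\<lambda>e j. if e = e0 then min (int l + 1) \<bar>int j - int j0\<bar> else int l + 1)"

lemma graph_lipschitz_dist_to_inner:
  assumes "l < j0" "j0 + l < L e0"
  shows "graph_lipschitz (dist_to_inner e0 j0)"
  unfolding dist_to_inner_def
proof (rule graph_lipschitz_extend_sub)
  fix e
  let ?H = "\<lambda>j. if e = e0 then min (int l + 1) \<bar>int j - int j0\<bar> else int l + 1"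
  show "\<exists>H. (\<forall>j. \<bar>H j - H (Suc j)\<bar> \<le> 1) \<and> int l + 1 = H 0 \<and> int l + 1 = H (L e)
      \<and> (\<forall>j. 0 < j \<longrightarrow> j < L e \<longrightarrow> ?H j = H j)"
    by (rule exI[of _ ?H]) (use assms in \<open>auto simp: min_def abs_if\<close>)
qed simp

subsection \<open>Deep paths between S and T\<close>

definition edge_walk :: "vtx \<times> vtx \<Rightarrow> vtx list" where
  "edge_walk e = map (subv L e) [0..<L e]"

text \<open>\<open>M_walk a b\<close> runs along the subdivided M from \<open>M_vertex a\<close> up to, but excluding,
  \<open>M_vertex b\<close>.\<close>
definition M_walk :: "nat \<Rightarrow> nat \<Rightarrow> vtx list" where
  "M_walk a b = concat (map (\<lambda>t. edge_walk (M_edge t)) [a..<b])"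

definition M_walk_vertices :: "nat \<Rightarrow> nat \<Rightarrow> vtx set" where
  "M_walk_vertices a b = {M_vertex t | t. a \<le> t \<and> t < b}
     \<union> {Sub (M_edge t) j | t j. a \<le> t \<and> t < b \<and> 0 < j \<and> j < L (M_edge t)}"

text \<open>From \<open>\<lambda>\<^sub>i\<close> up to \<open>p\<^sub>i\<close> and down towards \<open>\<rho>\<^sub>i\<close>, which is not included.\<close>
definition detour :: "nat \<Rightarrow> vtx list" where
  "detour i = rev (map (subv L (left_leaf_edge i)) [1..<L (left_leaf_edge i) + 1])
     @ edge_walk (right_leaf_edge i)"

definition detour_vertices :: "nat \<Rightarrow> vtx set" where
  "detour_vertices i = {lam k i, parent_vtx i}
     \<union> {Sub (left_leaf_edge i) j | j. 0 < j \<and> j < L (left_leaf_edge i)}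
     \<union> {Sub (right_leaf_edge i) j | j. 0 < j \<and> j < L (right_leaf_edge i)}"

definition detour_path :: "nat \<Rightarrow> vtx list" where
  "detour_path i = M_walk 0 (2*i - 2) @ detour i @ M_walk (2*i + 1) (2*m + 1) @ [rho k m]"

definition deep_ST_path :: "vtx list \<Rightarrow> bool" where
  "deep_ST_path P \<longleftrightarrow> is_path k L P \<and> hd P \<in> {root, lam k 1, S2} \<and> last P \<in> {root, T1, rho k m}
     \<and> (\<forall>v \<in> set P. int k - 2 \<le> depth v)"

lemma set_edge_walk: "set (edge_walk e) \<subseteq> insert (fst e) {Sub e j | j. 0 < j \<and> j < L e}"
  by (auto simp: edge_walk_def subv_def)

lemma set_M_walk: "set (M_walk a b) \<subseteq> M_walk_vertices a b"
  using set_edge_walk by (fastforce simp: M_walk_def M_walk_vertices_def M_edge_def)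

lemma set_detour: "1 \<le> i \<Longrightarrow> i \<le> m \<Longrightarrow> set (detour i) \<subseteq> detour_vertices i"
  using L_sub_edge[OF left_leaf_edge_in_sub_edges] L_sub_edge[OF right_leaf_edge_in_sub_edges]
  by (fastforce simp: detour_def detour_vertices_def edge_walk_def subv_def left_leaf_edge_def
      right_leaf_edge_def)

lemma M_vertex_in_M_walk_vertices_iff:
  "b \<le> 2*m+1 \<Longrightarrow> s \<le> 2*m+1 \<Longrightarrow> M_vertex s \<in> M_walk_vertices a b \<longleftrightarrow> a \<le> s \<and> s < b"
  unfolding M_walk_vertices_def using M_vertex_not_Sub by (auto simp: M_vertex_eq_iff)

lemma M_vertex_in_detour_vertices_iff:
  "s \<le> 2*m+1 \<Longrightarrow> 1 \<le> i \<Longrightarrow> i \<le> m \<Longrightarrow> M_vertex s \<in> detour_vertices i \<longleftrightarrow> s = 2*i - 2"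
  using M_vertex_ne_parent_vtx[of s i] M_vertex_not_Sub[of s]
  by (auto simp: detour_vertices_def lam_eq_M_vertex M_vertex_eq_iff)

lemma M_walk_vertices_disjoint: "b \<le> c \<Longrightarrow> d \<le> 2*m+1 \<Longrightarrow> M_walk_vertices a b \<inter> M_walk_vertices c d = {}"
  unfolding M_walk_vertices_def by (auto simp: M_vertex_eq_iff M_edge_eq_iff M_vertex_not_Sub dest: sym)

lemma M_walk_vertices_detour_vertices_disjoint:
  assumes "b \<le> 2*m+1" "1 \<le> i" "i \<le> m" "\<not> (a \<le> 2*i - 2 \<and> 2*i - 2 < b)"
  shows "M_walk_vertices a b \<inter> detour_vertices i = {}"
  using assms M_vertex_in_M_walk_vertices_iff[of b "2*i - 2" a] M_vertex_ne_parent_vtx[of _ i]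
    M_edge_ne_leaf_edge[of _ i]
  unfolding M_walk_vertices_def detour_vertices_def lam_eq_M_vertex[OF assms(2,3)]
  by (auto simp: M_vertex_not_Sub dest: sym)

lemma M_walk_vertices_subset_GV: "b \<le> 2*m+1 \<Longrightarrow> M_walk_vertices a b \<subseteq> GV k L"
  using M_vertex_in_Zset Zset_subset_GV
  unfolding M_walk_vertices_def by (auto intro!: Sub_in_GV M_edge_in_sub_edges)

lemma detour_vertices_subset_GV: "1 \<le> i \<Longrightarrow> i \<le> m \<Longrightarrow> detour_vertices i \<subseteq> GV k L"
  using M_vertex_in_Zset[of "2*i - 2"] Zset_subset_GV parent_vtx_in_GV[of i]
    left_leaf_edge_in_sub_edges[of i] right_leaf_edge_in_sub_edges[of i]
  unfolding detour_vertices_def lam_eq_M_vertex by (force intro: Sub_in_GV)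

lemma distinct_edge_walk: "(\<And>j. fst e \<noteq> Sub e j) \<Longrightarrow> distinct (edge_walk e)"
  unfolding edge_walk_def by (rule distinct_map[THEN iffD2]) (auto simp: inj_on_def subv_def; metis)

lemma M_walk_Suc: "a \<le> b \<Longrightarrow> M_walk a (Suc b) = M_walk a b @ edge_walk (M_edge b)"
  by (simp add: M_walk_def)

lemma distinct_M_walk: "b \<le> 2*m+1 \<Longrightarrow> distinct (M_walk a b)"
proof (induction b)
  case (Suc b)
  show ?case
  proof (cases "a \<le> b")
    case True
    have "distinct (edge_walk (M_edge b))"
      using Suc.prems M_vertex_not_Sub[of b] by (intro distinct_edge_walk) (auto simp: M_edge_def)
    moreover have "set (M_walk a b) \<inter> set (edge_walk (M_edge b)) = {}"
      using set_M_walk[of a b] set_M_walk[of b "Suc b"] M_walk_vertices_disjoint[of b b "Suc b" a]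
        Suc.prems by (auto simp: M_walk_def)
    ultimately show ?thesis using Suc True by (simp add: M_walk_Suc)
  qed (simp add: M_walk_def)
qed (simp add: M_walk_def)

lemma distinct_detour: "1 \<le> i \<Longrightarrow> i \<le> m \<Longrightarrow> distinct (detour i)"
proof -
  assume i: "1 \<le> i" "i \<le> m"
  have "lam k i \<noteq> parent_vtx i" using i m_ge_8 by (simp add: lam_Tr parent_vtx_def)
  moreover have "distinct (map (subv L (left_leaf_edge i)) [1..<L (left_leaf_edge i) + 1])"
    by (rule distinct_map[THEN iffD2]) (auto simp: inj_on_def subv_def left_leaf_edge_def lam_def)
  moreover have "distinct (edge_walk (right_leaf_edge i))"
    by (rule distinct_edge_walk) (simp add: right_leaf_edge_def)
  ultimately show ?thesis
    using L_sub_edge[OF left_leaf_edge_in_sub_edges[OF i]] left_ne_right_leaf_edge[of i i]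
    by (auto simp: detour_def edge_walk_def subv_def left_leaf_edge_def right_leaf_edge_def lam_def
        parent_vtx_def)
qed

lemma adj_subv: "e \<in> sub_edges k \<Longrightarrow> j < L e \<Longrightarrow> adj k L (subv L e j) (subv L e (Suc j))"
  unfolding adj_def GE_def by (intro disjI1 UnI2 CollectI exI[of _ e] exI[of _ j]) simp

lemma successively_adj_subv: "e \<in> sub_edges k \<Longrightarrow> b \<le> L e + 1 \<Longrightarrow> successively (adj k L) (map (subv L e) [a..<b])"
  unfolding successively_map by (rule successively_upt) (auto intro: adj_subv)

lemma edge_walk_snoc: "e \<in> sub_edges k \<Longrightarrow> edge_walk e @ [snd e] = map (subv L e) [0..<L e + 1]"
  by (simp add: edge_walk_def subv_L)

lemma hd_edge_walk: "e \<in> sub_edges k \<Longrightarrow> edge_walk e \<noteq> [] \<and> hd (edge_walk e) = fst e"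
  using L_sub_edge[of e] by (simp add: edge_walk_def upt_conv_Cons)

lemma hd_M_walk_snoc: "a \<le> b \<Longrightarrow> b \<le> 2*m+1 \<Longrightarrow> hd (M_walk a b @ [M_vertex b]) = M_vertex a"
proof (cases "a = b")
  case False
  assume "a \<le> b" "b \<le> 2*m+1"
  then have "M_walk a b = edge_walk (M_edge a) @ M_walk (Suc a) b"
    using False by (simp add: M_walk_def upt_conv_Cons)
  moreover have "a < 2*m+1" using \<open>a \<le> b\<close> \<open>b \<le> 2*m+1\<close> False by linarith
  ultimately show ?thesis using hd_edge_walk[OF M_edge_in_sub_edges[of a]] by (simp add: M_edge_def)
qed (simp add: M_walk_def)

lemma successively_M_walk: "a \<le> b \<Longrightarrow> b \<le> 2*m+1 \<Longrightarrow> successively (adj k L) (M_walk a b @ [M_vertex b])"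
proof (induction b rule: dec_induct)
  case (step n)
  have e: "M_edge n \<in> sub_edges k" using step by (intro M_edge_in_sub_edges) auto
  have "M_walk a (Suc n) @ [M_vertex (Suc n)] = M_walk a n @ map (subv L (M_edge n)) [0..<L (M_edge n) + 1]"
    using step edge_walk_snoc[OF e] by (simp add: M_walk_Suc M_edge_def)
  also have "\<dots> = M_walk a n @ M_vertex n # map (subv L (M_edge n)) [1..<L (M_edge n) + 1]"
    by (simp add: upt_conv_Cons M_edge_def del: upt_Suc)
  finally show ?case
    using successively_append_join[OF step.IH] step.prems successively_adj_subv[OF e, of "L (M_edge n) + 1" 0]
    by (simp add: upt_conv_Cons M_edge_def del: upt_Suc)
qed (simp add: M_walk_def)

lemma successively_detour: "1 \<le> i \<Longrightarrow> i \<le> m \<Longrightarrow> successively (adj k L) (detour i @ [rho k i])"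
proof -
  assume i: "1 \<le> i" "i \<le> m"
  note e1 = left_leaf_edge_in_sub_edges[OF i] and e2 = right_leaf_edge_in_sub_edges[OF i]
  have up: "rev (map (subv L (left_leaf_edge i)) [1..<L (left_leaf_edge i) + 1]) @ [parent_vtx i]
      = rev (map (subv L (left_leaf_edge i)) [0..<L (left_leaf_edge i) + 1])"
    using L_sub_edge[OF e1] by (simp add: upt_conv_Cons left_leaf_edge_def)
  have down: "edge_walk (right_leaf_edge i) @ [rho k i]
      = parent_vtx i # map (subv L (right_leaf_edge i)) [1..<L (right_leaf_edge i) + 1]"
    using edge_walk_snoc[OF e2] L_sub_edge[OF e2]
    by (simp add: upt_conv_Cons right_leaf_edge_def del: upt_Suc)
  have "successively (adj k L) (rev (map (subv L (left_leaf_edge i)) [1..<L (left_leaf_edge i) + 1]) @ [parent_vtx i])"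
    unfolding up successively_rev using successively_adj_subv[OF e1, of "L (left_leaf_edge i) + 1" 0]
    by (simp add: adj_def successively_map disj_commute del: upt_Suc)
  moreover have "successively (adj k L) (parent_vtx i # map (subv L (right_leaf_edge i)) [1..<L (right_leaf_edge i) + 1])"
    using successively_adj_subv[OF e2, of "L (right_leaf_edge i) + 1" 0] L_sub_edge[OF e2]
    by (simp add: upt_conv_Cons right_leaf_edge_def del: upt_Suc)
  ultimately show ?thesis
    using successively_append_join by (fastforce simp: detour_def down)
qed

lemma hd_detour: "1 \<le> i \<Longrightarrow> i \<le> m \<Longrightarrow> detour i \<noteq> [] \<and> hd (detour i) = lam k i"
proof -
  assume i: "1 \<le> i" "i \<le> m"
  then have "L (left_leaf_edge i) \<ge> 1" using L_sub_edge[OF left_leaf_edge_in_sub_edges] by fastforce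
  then show ?thesis
    using subv_L[OF left_leaf_edge_in_sub_edges[OF i]] by (simp add: detour_def left_leaf_edge_def)
qed

lemma depth_M_walk_vertices: "v \<in> M_walk_vertices a b \<Longrightarrow> b \<le> 2*m+1 \<Longrightarrow> depth v = int k - 1"
  unfolding M_walk_vertices_def using M_vertex_in_Zset depth_Zset by (auto simp: depth_Sub)

lemma depth_detour_vertices: "1 \<le> i \<Longrightarrow> i \<le> m \<Longrightarrow> v \<in> detour_vertices i \<Longrightarrow> int k - 2 \<le> depth v"
  using depth_Zset[OF M_vertex_in_Zset[of "2*i - 2"]] depth_parent_vtx[of i]
  by (auto simp: detour_vertices_def depth_Sub lam_eq_M_vertex)

lemma is_pathI:
  "xs \<noteq> [] \<Longrightarrow> distinct xs \<Longrightarrow> set xs \<subseteq> GV k L \<Longrightarrow> successively (adj k L) xs \<Longrightarrow> is_path k L xs"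
  unfolding is_path_def successively_conv_nth by auto

lemma deep_ST_path_M_walk:
  assumes "a \<le> 1" "2*m \<le> b" "b \<le> 2*m+1"
  shows "deep_ST_path (M_walk a b @ [M_vertex b])"
proof -
  have a: "a \<le> b" "a \<le> 2*m+1" using assms m_ge_8 by linarith+
  have "M_vertex b \<notin> M_walk_vertices a b" using M_vertex_in_M_walk_vertices_iff[of b b a] assms by simp
  then have "distinct (M_walk a b @ [M_vertex b])" using distinct_M_walk[of b a] set_M_walk[of a b] assms by auto
  moreover have "set (M_walk a b @ [M_vertex b]) \<subseteq> GV k L"
    using set_M_walk[of a b] M_walk_vertices_subset_GV[of b a] M_vertex_in_Zset[of b] Zset_subset_GV assms
    by auto
  ultimately have "is_path k L (M_walk a b @ [M_vertex b])"
    using successively_M_walk[OF a(1) assms(3)] by (intro is_pathI) auto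
  moreover have "\<forall>v \<in> set (M_walk a b @ [M_vertex b]). int k - 2 \<le> depth v"
    using set_M_walk[of a b] depth_M_walk_vertices[of _ a b] depth_Zset[OF M_vertex_in_Zset[of b]] assms
    by fastforce
  moreover have "hd (M_walk a b @ [M_vertex b]) \<in> {root, lam k 1, S2}"
    using hd_M_walk_snoc[OF a(1) assms(3)] assms(1) by (cases a) auto
  moreover have "b = 2*m \<or> b = Suc (2*m)" using assms by linarith
  ultimately show ?thesis unfolding deep_ST_path_def by auto
qed

lemma set_detour_path:
  "1 \<le> i \<Longrightarrow> i \<le> m \<Longrightarrow> set (detour_path i) \<subseteq>
     M_walk_vertices 0 (2*i - 2) \<union> detour_vertices i \<union> M_walk_vertices (2*i + 1) (2*m + 1) \<union> {rho k m}"
  using set_M_walk set_detour unfolding detour_path_def by fastforce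

lemma distinct_detour_path: "1 \<le> i \<Longrightarrow> i \<le> m \<Longrightarrow> distinct (detour_path i)"
proof -
  assume i: "1 \<le> i" "i \<le> m"
  let ?MA = "M_walk_vertices 0 (2*i - 2)" and ?MC = "M_walk_vertices (2*i + 1) (2*m + 1)"
  have sets: "set (M_walk 0 (2*i - 2)) \<subseteq> ?MA" "set (detour i) \<subseteq> detour_vertices i"
      "set (M_walk (2*i + 1) (2*m + 1)) \<subseteq> ?MC"
    using set_M_walk set_detour[OF i] by blast+
  have "distinct (M_walk 0 (2*i - 2))" "distinct (detour i)" "distinct (M_walk (2*i + 1) (2*m + 1))"
    using distinct_M_walk[of "2*i - 2" 0] distinct_M_walk[of "2*m + 1" "2*i + 1"] distinct_detour[OF i] i
    by auto
  moreover have "?MA \<inter> detour_vertices i = {}" "?MC \<inter> detour_vertices i = {}" "?MA \<inter> ?MC = {}"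
    using M_walk_vertices_detour_vertices_disjoint[of _ i] M_walk_vertices_disjoint i by auto
  moreover have "rho k m \<notin> ?MA" "rho k m \<notin> detour_vertices i" "rho k m \<notin> ?MC"
    using M_vertex_in_M_walk_vertices_iff[of _ "2*m + 1"] M_vertex_in_detour_vertices_iff[of "2*m + 1" i] i
    by (simp_all del: M_vertex_special add: M_vertex_special(4)[symmetric])
  ultimately show ?thesis using sets unfolding detour_path_def by auto
qed

lemma successively_detour_path: "1 \<le> i \<Longrightarrow> i \<le> m \<Longrightarrow> successively (adj k L) (detour_path i)"
proof -
  assume i: "1 \<le> i" "i \<le> m"
  let ?C = "M_walk (2*i + 1) (2*m + 1) @ [rho k m]"
  have "successively (adj k L) ?C" "hd ?C = rho k i"
    using successively_M_walk[of "2*i + 1" "2*m + 1"] hd_M_walk_snoc[of "2*i + 1" "2*m + 1"]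
      rho_eq_M_vertex[OF i] i by simp_all
  moreover obtain RC where "?C = rho k i # RC" using \<open>hd ?C = rho k i\<close> by (cases ?C) auto
  ultimately have "successively (adj k L) (detour i @ ?C)"
    using successively_append_join[OF successively_detour[OF i]] by simp
  moreover obtain RD where "detour i = lam k i # RD"
    using hd_detour[OF i] by (cases "detour i") auto
  moreover have "successively (adj k L) (M_walk 0 (2*i - 2) @ [lam k i])"
    using successively_M_walk[of 0 "2*i - 2"] lam_eq_M_vertex[OF i] i by simp
  ultimately show ?thesis
    unfolding detour_path_def using successively_append_join[of "adj k L" "M_walk 0 (2*i - 2)" "lam k i"]
    by simp
qed

lemma hd_detour_path: "1 \<le> i \<Longrightarrow> i \<le> m \<Longrightarrow> hd (detour_path i) = lam k 1"
proof (cases "i = 1")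
  case True
  assume i: "1 \<le> i" "i \<le> m"
  then show ?thesis using True hd_detour[OF i] by (simp add: detour_path_def M_walk_def)
next
  case False
  assume "1 \<le> i" "i \<le> m"
  then have "M_walk 0 (2*i - 2) = edge_walk (M_edge 0) @ M_walk 1 (2*i - 2)"
    using False by (simp add: M_walk_def upt_conv_Cons)
  then show ?thesis using hd_edge_walk[OF M_edge_in_sub_edges[of 0]]
    by (simp add: detour_path_def M_edge_def)
qed

lemma deep_ST_path_detour_path:
  assumes i: "1 \<le> i" "i \<le> m"
  shows "deep_ST_path (detour_path i)"
proof -
  have rho_m: "rho k m \<in> Zset k" using M_vertex_in_Zset[of "2*m + 1"] by simp
  have "M_walk_vertices 0 (2*i - 2) \<subseteq> GV k L" "M_walk_vertices (2*i + 1) (2*m + 1) \<subseteq> GV k L"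
    using M_walk_vertices_subset_GV i by simp_all
  then have "set (detour_path i) \<subseteq> GV k L"
    using set_detour_path[OF i] detour_vertices_subset_GV[OF i] Zset_subset_GV rho_m by blast
  then have "is_path k L (detour_path i)"
    using distinct_detour_path[OF i] successively_detour_path[OF i] by (intro is_pathI) (auto simp: detour_path_def)
  moreover have "\<forall>v \<in> set (detour_path i). int k - 2 \<le> depth v"
    using set_detour_path[OF i] depth_M_walk_vertices[of _ 0 "2*i - 2"]
      depth_M_walk_vertices[of _ "2*i + 1" "2*m + 1"] depth_detour_vertices[OF i] depth_Zset[OF rho_m] i
    by fastforce
  ultimately show ?thesis
    using hd_detour_path[OF i] unfolding deep_ST_path_def by (simp add: detour_path_def)
qed

subsection \<open>Paths far from a single vertex\<close>

definition outside_star :: "vtx \<Rightarrow> vtx \<Rightarrow> bool" where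
  "outside_star z v \<longleftrightarrow> v \<noteq> z \<and> (\<forall>e j. v = Sub e j \<longrightarrow> fst e \<noteq> z \<and> snd e \<noteq> z)"

lemma dist_to_vertex_outside_star: "outside_star z v \<Longrightarrow> dist_to_vertex z v = 2 * int l + 1"
  by (cases v) (auto simp: outside_star_def dist_to_vertex_def extend_sub_def)

lemma outside_star_M_walk_vertices:
  "v \<in> M_walk_vertices a b \<Longrightarrow> b \<le> 2*m+1 \<Longrightarrow> t0 \<le> 2*m+1 \<Longrightarrow> t0 < a \<or> b < t0
    \<Longrightarrow> outside_star (M_vertex t0) v"
  using M_vertex_not_Sub
  by (auto simp: M_walk_vertices_def outside_star_def M_edge_def M_vertex_eq_iff dest: sym)

lemma outside_star_M_vertex:
  "s \<le> 2*m+1 \<Longrightarrow> t \<le> 2*m+1 \<Longrightarrow> s \<noteq> t \<Longrightarrow> outside_star (M_vertex t) (M_vertex s)"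
  using M_vertex_not_Sub[of s] by (simp add: outside_star_def M_vertex_eq_iff)

lemma outside_star_detour_vertices:
  assumes "1 \<le> i" "i \<le> m" "t0 = 2*i - 1 \<or> t0 = 2*i" "v \<in> detour_vertices i"
  shows "outside_star (M_vertex t0) v"
proof -
  have t0: "t0 \<le> 2*m+1" using assms(2,3) by linarith
  have "M_vertex (2*i - 2) \<noteq> M_vertex t0" "M_vertex (2*i + 1) \<noteq> M_vertex t0"
    using assms(1-3) t0 by (auto simp: M_vertex_eq_iff simp del: M_vertex_special)
  then have ends: "lam k i \<noteq> M_vertex t0" "rho k i \<noteq> M_vertex t0" "parent_vtx i \<noteq> M_vertex t0"
    using M_vertex_ne_parent_vtx[OF t0 assms(1,2)] lam_eq_M_vertex[OF assms(1,2)]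
      rho_eq_M_vertex[OF assms(1,2)] by auto
  have "\<And>e j. Sub e j \<noteq> M_vertex t0" using M_vertex_not_Sub[OF t0] by metis
  then show ?thesis
    using assms(4) ends unfolding detour_vertices_def outside_star_def left_leaf_edge_def right_leaf_edge_def
    by auto
qed

lemma deep_ST_path_outside_star:
  assumes "z \<in> Zset k"
  obtains P where "deep_ST_path P" "\<forall>v \<in> set P. outside_star z v"
proof -
  obtain t0 where t0: "t0 \<le> 2*m+1" "z = M_vertex t0" using assms unfolding Zset_eq_M_vertices by auto
  have M_walk_outside_star: "\<forall>v \<in> set (M_walk a b @ [M_vertex b]). outside_star (M_vertex t0) v"
    if "a \<le> b" "b \<le> 2*m+1" "t0 < a \<or> b < t0" for a b
  proof
    fix v assume "v \<in> set (M_walk a b @ [M_vertex b])"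
    then have "v \<in> M_walk_vertices a b \<or> v = M_vertex b" using set_M_walk by auto
    then show "outside_star (M_vertex t0) v"
      using outside_star_M_walk_vertices[of v a b t0] outside_star_M_vertex[of b t0] that t0(1) by auto
  qed
  consider "t0 = 0" | "t0 = 2*m+1" | "1 \<le> t0 \<and> t0 \<le> 2*m" using t0(1) by linarith
  then have "\<exists>P. deep_ST_path P \<and> (\<forall>v \<in> set P. outside_star (M_vertex t0) v)"
  proof cases
    case 1
    have "deep_ST_path (M_walk 1 (2*m+1) @ [M_vertex (2*m+1)])" by (rule deep_ST_path_M_walk) simp_all
    moreover have "\<forall>v \<in> set (M_walk 1 (2*m+1) @ [M_vertex (2*m+1)]). outside_star (M_vertex t0) v"
      by (rule M_walk_outside_star) (use 1 in simp_all)
    ultimately show ?thesis by blast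
  next
    case 2
    have "deep_ST_path (M_walk 0 (2*m) @ [M_vertex (2*m)])" by (rule deep_ST_path_M_walk) simp_all
    moreover have "\<forall>v \<in> set (M_walk 0 (2*m) @ [M_vertex (2*m)]). outside_star (M_vertex t0) v"
      by (rule M_walk_outside_star) (use 2 in simp_all)
    ultimately show ?thesis by blast
  next
    case 3
    define i where "i = (t0 + 1) div 2"
    have i: "1 \<le> i" "i \<le> m" "t0 = 2*i - 1 \<or> t0 = 2*i" using 3 unfolding i_def by presburger+
    have "outside_star (M_vertex t0) v" if "v \<in> set (detour_path i)" for v
      using set_detour_path[OF i(1,2)] that outside_star_detour_vertices[OF i]
        outside_star_M_walk_vertices[of v 0 "2*i - 2" t0] outside_star_M_walk_vertices[of v "2*i + 1" "2*m + 1" t0]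
        M_walk_outside_star[of "2*m+1" "2*m+1"] i t0(1)
      by (auto simp: M_walk_def)
    then show ?thesis using deep_ST_path_detour_path[OF i(1,2)] by blast
  qed
  then show ?thesis using that t0(2) by blast
qed

lemma far_path_if_near_Z:
  assumes "z \<in> Zset k" "dist_to_vertex z y \<le> int l"
  shows "\<exists>P. deep_ST_path P \<and> far_from y P"
proof -
  obtain P where "deep_ST_path P" "\<forall>v \<in> set P. outside_star z v"
    using deep_ST_path_outside_star[OF assms(1)] by blast
  moreover have "far_from y P"
    using graph_lipschitz_dist_to_vertex[OF assms(1)] assms(2) calculation(2) dist_to_vertex_outside_star
    by (intro far_from_if_lipschitz) auto
  ultimately show ?thesis by blast
qed

lemma far_path_if_inside_M_edge:
  assumes "t < 2*m+1" "l < j" "j + l < L (M_edge t)"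
  shows "\<exists>P. deep_ST_path P \<and> far_from (Sub (M_edge t) j) P"
proof -
  obtain P where "deep_ST_path P" "\<forall>v \<in> set P. outside_star (M_vertex t) v"
    using deep_ST_path_outside_star[OF M_vertex_in_Zset[of t]] assms(1) by auto
  moreover have "dist_to_inner (M_edge t) j v = int l + 1" if "v \<in> set P" for v
    using calculation(2) that
    by (cases v) (auto simp: dist_to_inner_def extend_sub_def outside_star_def M_edge_def)
  then have "far_from (Sub (M_edge t) j) P"
    using graph_lipschitz_dist_to_inner[OF assms(2,3)] by (intro far_from_if_lipschitz) (auto simp: dist_to_inner_def)
  ultimately show ?thesis by blast
qed

lemma far_path_if_far_from_M:
  assumes "dist_to_M y = int l + 1"
  shows "\<exists>P. deep_ST_path P \<and> far_from y P"
proof -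
  let ?P = "M_walk 0 (2*m+1) @ [M_vertex (2*m+1)]"
  have "dist_to_M v = 0" if "v \<in> set ?P" for v
    using that set_M_walk[of 0 "2*m+1"] M_vertex_in_Zset[of "2*m+1"] M_vertex_in_Zset
    by (auto simp: M_walk_vertices_def dist_to_M_def M_edge_def simp del: M_vertex_special)
  then have "far_from y ?P"
    using assms graph_lipschitz_dist_to_M by (intro far_from_if_lipschitz) auto
  moreover have "deep_ST_path ?P" by (rule deep_ST_path_M_walk) simp_all
  ultimately show ?thesis by blast
qed

lemma far_path_exists:
  assumes "y \<in> GV k L"
  shows "\<exists>P. deep_ST_path P \<and> far_from y P"
proof -
  have "y \<in> tree_vertices k \<or> y \<in> {S2, T1} \<or> (\<exists>e j. y = Sub e j \<and> e \<in> sub_edges k \<and> 0 < j \<and> j < L e)"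
    using assms unfolding GV_def by auto
  then consider (tree) c where "y = Tr c" "c < 2*m" | (Z) "y \<in> Zset k"
    | (sub) e j where "y = Sub e j" "e \<in> sub_edges k" "0 < j" "j < L e"
  proof (elim disjE exE conjE)
    assume "y \<in> tree_vertices k"
    then obtain c where "y = Tr c" "c < 4*m" unfolding tree_vertices_conv by auto
    then show thesis using that(1,2) by (cases "c < 2*m") (auto simp: Tr_in_Zset_iff)
  qed (use that in \<open>auto simp: Zset_def\<close>)
  then show ?thesis
  proof cases
    case tree
    then have "dist_to_M y = int l + 1" by (simp add: dist_to_M_def extend_sub_def Tr_in_Zset_iff)
    then show ?thesis by (rule far_path_if_far_from_M)
  next
    case Z
    then show ?thesis using far_path_if_near_Z[of y] dist_to_vertex_self by simp
  next
    case sub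
    have fst_near: ?thesis if "fst e \<in> Zset k" "j \<le> l"
      using far_path_if_near_Z[OF that(1)] that(2) dist_to_vertex_fst_le[of e j] sub(1) by simp
    have snd_near: ?thesis if "snd e \<in> Zset k" "L e - j \<le> l"
      using far_path_if_near_Z[OF that(1)] that(2) dist_to_vertex_snd_le[of e j] sub(1,4) by simp
    from sub(2) show ?thesis
    proof (cases rule: sub_edge_cases)
      case (M t)
      then have "fst e \<in> Zset k" "snd e \<in> Zset k"
        using M_vertex_in_Zset[of t] M_vertex_in_Zset[of "Suc t"] by (auto simp: M_edge_def)
      consider "j \<le> l" | "L e - j \<le> l" | "l < j \<and> j + l < L e" by linarith
      then show ?thesis
        by cases (use fst_near snd_near far_path_if_inside_M_edge[of t j] sub M \<open>fst e \<in> Zset k\<close>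
            \<open>snd e \<in> Zset k\<close> in auto)
    next
      case (leaf c)
      show ?thesis
      proof (cases "L e - j \<le> l")
        case True
        then show ?thesis using snd_near leaf by (simp add: Tr_in_Zset_iff)
      next
        case False
        then have "dist_to_M y = int l + 1" using sub leaf by (simp add: dist_to_M_def Tr_in_Zset_iff)
        then show ?thesis by (rule far_path_if_far_from_M)
      qed
    qed
  qed
qed

lemma far_from_if_near_root:
  assumes "dist_le k L x root l" and "deep_ST_path P"
  shows "far_from x P"
proof (rule far_from_if_lipschitz[OF graph_lipschitz_depth])
  have "\<not> int l < \<bar>depth x - depth root\<bar>"
    using not_dist_le_if_lipschitz[OF graph_lipschitz_depth] assms(1) by blast
  then have "depth x \<le> int l" by (simp add: depth_root)
  moreover fix v assume "v \<in> set P"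
  then have "int k - 2 \<le> depth v" using assms(2) unfolding deep_ST_path_def by blast
  ultimately show "int l < \<bar>depth x - depth v\<bar>" using k_gt by linarith
qed

end

theorem mainTheorem2:
  fixes l k :: nat and L :: "(vtx \<times> vtx) \<Rightarrow> nat" and X :: "vtx set"
  assumes "l \<ge> 1" and "k > 2 * l + 2"
    and "\<forall>e \<in> sub_edges k. L e > 2 * l"
    and "X \<subseteq> GV k L" and "finite X" and "card X \<le> 2"
  shows "\<exists>P. is_path k L P
           \<and> hd P \<in> {root, lam k 1, S2} \<and> last P \<in> {root, T1, rho k (m_of k)}
           \<and> (\<forall>x \<in> X. \<forall>v \<in> set P. \<not> dist_le k L x v l)"
proof -
  interpret subdivided_Gk l k L using assms(1-3) by unfold_locales
  show ?thesis
  proof (cases "\<exists>x \<in> X. dist_le k L x root l")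
    case False
    have "is_path k L [root]" using root_in_GV by (simp add: is_path_def)
    then show ?thesis using False by (intro exI[of _ "[root]"]) auto
  next
    case True
    then obtain x1 where x1: "x1 \<in> X" "dist_le k L x1 root l" by blast
    obtain x2 where x2: "x2 \<in> X" "X \<subseteq> {x1, x2}" using card_le_2_obtain[OF assms(5,6) x1(1)] .
    obtain P where P: "deep_ST_path P" "far_from x2 P" using far_path_exists x2(1) assms(4) by blast
    moreover have "far_from x1 P" using far_from_if_near_root[OF x1(2) P(1)] .
    ultimately have "\<forall>x \<in> X. far_from x P" using x2(2) by blast
    then show ?thesis using P(1) unfolding deep_ST_path_def far_from_def by blast
  qed
qed

end
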